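(* Let $n\ge3$. The elements of $R$ whose binary representation has length $2n+7$ and begins with $100100$ are exactly $[100100(10)^{n-1}010]_2$ and $[100100(10)^n0]_2$.
   Context: Stern's sequence $(a(n))_{n\ge0}$: $a(0)=0$, $a(1)=1$, $a(2n)=a(n)$, $a(2n+1)=a(n)+a(n+1)$; $s(n)=a(n+1)$. $R$ is the set of record-setters of $s$, i.e. indices $v\ge0$ with $s(i)<s(v)$ for all $i<v$. Binary representations have no leading zeros. For a binary string $x$, $[x]_2$ is the integer it represents in base 2; $x^i$ denotes $i$-fold concatenation. *)

theory Defs
  imports Main
begin

function stern :: "nat \<Rightarrow> nat" where
  "stern 0 = 0"
| "stern (Suc 0) = 1"
| "stern (Suc (Suc m)) = (let n = Suc (Suc m) in
     if even n then stern (n div 2) else stern (n div 2) + stern (n div 2 + 1))"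
  by pat_completeness auto
termination by (relation "measure id") (auto elim: oddE)

definition s :: "nat \<Rightarrow> nat" where
  "s n = stern (n + 1)"

definition R :: "nat set" where
  "R = {v. \<forall>i<v. s i < s v}"

text \<open>Binary strings as lists of bits (True = 1), most significant bit first.\<close>
fun bin_val :: "bool list \<Rightarrow> nat" where
  "bin_val [] = 0"
| "bin_val xs = 2 * bin_val (butlast xs) + (if last xs then 1 else 0)"

fun bin_rep :: "nat \<Rightarrow> bool list" where
  "bin_rep 0 = []"
| "bin_rep n = bin_rep (n div 2) @ [odd n]"

definition pow_str :: "bool list \<Rightarrow> nat \<Rightarrow> bool list" where
  "pow_str x i = concat (replicate i x)"

end

theory Submission
  imports Defs "HOL-Number_Theory.Fib"
begin

(*
  Reading the binary digits of v from the most significant one, the pair (a v, a (v + 1))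
  starts at (0, 1) and evolves by (x, y) \<mapsto> (x + y, y) on a 1 and (x, y) \<mapsto> (x, x + y)
  on a 0, so s v is the second component of the final pair. After the prefix 100100 the pair is
  (4, 11), a block 10 acts as (x, y) \<mapsto> (x + y, x + 2y), and after k arbitrary further digits
  the second component is at most fib k * x + fib (k + 1) * y or the same with x, y swapped.

  Write A and B for the two claimed records and C = [1000(10)^(n+1)0]. A number of length 2n+7
  with prefix 100100 and tail w has s-value at most s C if w is lexicographically below the
  tail of A, at most s A if w is below the tail of B, and at most s B if w is above it; every
  number below [100100 0^(2n+1)] has s-value at most s C as well. For n \<ge> 3 the values
  s C, s A, s B are explicit linear forms in fib (2n - 6) and fib (2n - 5) with
  s C < s A < s B. As C is smaller than every number with prefix 100100, exactly A and B are
  records.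
*)

lemma stern_double: "stern (2 * m) = stern m"
proof (cases m)
  case (Suc k)
  then have "2 * m = Suc (Suc (2 * k))" by simp
  then show ?thesis using Suc by (simp add: Let_def)
qed simp

lemma stern_double_Suc: "stern (2 * m + 1) = stern m + stern (m + 1)"
proof (cases m)
  case (Suc k)
  then have "2 * m + 1 = Suc (Suc (2 * k + 1))" by simp
  then show ?thesis using Suc by (simp add: Let_def)
qed simp

lemma bin_val_snoc [simp]: "bin_val (xs @ [b]) = 2 * bin_val xs + (if b then 1 else 0)"
proof -
  obtain c cs where c: "xs @ [b] = c # cs" by (cases "xs @ [b]") auto
  have "bin_val (c # cs) = 2 * bin_val (butlast (c # cs)) + (if last (c # cs) then 1 else 0)"
    by (rule bin_val.simps(2))
  then show ?thesis unfolding c [symmetric] by simp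
qed

declare bin_val.simps(2) [simp del]

lemma bin_val_append: "bin_val (xs @ ys) = bin_val xs * 2 ^ length ys + bin_val ys"
  by (induction ys rule: rev_induct) (simp_all flip: append_assoc add: algebra_simps)

lemma bin_val_Cons: "bin_val (b # xs) = (if b then 2 ^ length xs else 0) + bin_val xs"
  using bin_val_append [of "[b]" xs] bin_val_snoc [of "[]" b] by simp

lemma bin_val_less_power: "bin_val xs < 2 ^ length xs"
  by (induction xs rule: rev_induct) auto

lemma ex_bin_val_eq:
  assumes "i < 2 ^ L"
  shows "\<exists>xs. length xs = L \<and> bin_val xs = i"
  using assms
proof (induction L arbitrary: i)
  case (Suc L)
  then obtain xs where "length xs = L" "bin_val xs = i div 2"
    by (metis less_mult_imp_div_less power_Suc2)
  then show ?case
    by (intro exI [of _ "xs @ [odd i]"]) simp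
qed simp

lemma bin_val_bin_rep: "bin_val (bin_rep v) = v"
  by (induction v rule: bin_rep.induct) auto

lemma bin_rep_bin_val: "bin_rep (bin_val (True # xs)) = True # xs"
proof (induction xs rule: rev_induct)
  case Nil
  show ?case using bin_val_snoc [of "[]" True] by (simp add: numeral_2_eq_2)
next
  case (snoc b xs)
  have "bin_val (True # xs) > 0" by (simp add: bin_val_Cons)
  then obtain k where k: "bin_val (True # xs @ [b]) = Suc k"
    using bin_val_snoc [of "True # xs" b] by (metis Suc_pred add_gr_0 mult_pos_pos pos2 append_Cons)
  have "Suc k div 2 = bin_val (True # xs)" "odd (Suc k) = b"
    using k bin_val_snoc [of "True # xs" b] by auto
  then show ?case using k snoc by simp
qed

lemma bin_rep_prefix_iff:
  "length (bin_rep v) = length (True # p) + k \<and> take (length (True # p)) (bin_rep v) = True # p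
    \<longleftrightarrow> (\<exists>w. length w = k \<and> v = bin_val ((True # p) @ w))"
proof
  assume "length (bin_rep v) = length (True # p) + k \<and> take (length (True # p)) (bin_rep v) = True # p"
  then show "\<exists>w. length w = k \<and> v = bin_val ((True # p) @ w)"
    by (metis append_take_drop_id bin_val_bin_rep length_drop add_diff_cancel_left')
next
  assume "\<exists>w. length w = k \<and> v = bin_val ((True # p) @ w)"
  then show "length (bin_rep v) = length (True # p) + k \<and> take (length (True # p)) (bin_rep v) = True # p"
    using bin_rep_bin_val by (metis Cons_eq_appendI append_eq_conv_conj length_append)
qed

lemma bin_val_less_iff_lexordp:
  "length xs = length ys \<Longrightarrow> bin_val xs < bin_val ys \<longleftrightarrow> ord_class.lexordp xs ys"
proof (induction xs ys rule: list_induct2)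
  case (Cons x xs y ys)
  then show ?case
    using bin_val_less_power [of xs] bin_val_less_power [of ys]
    by (auto simp: bin_val_Cons)
qed simp

lemma lexordp_Cons_right_iff:
  "ord_class.lexordp xs (y # ys) \<longleftrightarrow>
     xs = [] \<or> (\<exists>x xs'. xs = x # xs' \<and> (x < y \<or> x = y \<and> ord_class.lexordp xs' ys))"
  for y :: "'a::linorder"
  by (cases xs) (auto simp: not_less_iff_gr_or_eq)

lemma lexordp_Cons_left_iff:
  "ord_class.lexordp (x # xs) ys \<longleftrightarrow>
     (\<exists>y ys'. ys = y # ys' \<and> (x < y \<or> x = y \<and> ord_class.lexordp xs ys'))"
  for x :: "'a::linorder"
  by (cases ys) (auto simp: not_less_iff_gr_or_eq)

fun stern_step :: "bool \<Rightarrow> nat \<times> nat \<Rightarrow> nat \<times> nat" where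
  "stern_step b (x, y) = (if b then (x + y, y) else (x, x + y))"

lemma fold_stern_step_bin_val:
  "fold stern_step bs (0, 1) = (stern (bin_val bs), stern (bin_val bs + 1))"
proof (induction bs rule: rev_induct)
  case (snoc b bs)
  have "stern (2 * bin_val bs + 2) = stern (bin_val bs + 1)"
    using stern_double [of "bin_val bs + 1"] by (simp add: algebra_simps)
  then show ?case
    using snoc stern_double [of "bin_val bs"] stern_double_Suc [of "bin_val bs"]
    by (auto simp: add.commute)
qed simp

lemma s_bin_val: "s (bin_val bs) = snd (fold stern_step bs (0, 1))"
  using fold_stern_step_bin_val [of bs] by (simp add: s_def)

lemma snd_fold_stern_step_le_fib:
  "snd (fold stern_step w (x, y))
     \<le> max (fib (length w) * x + fib (Suc (length w)) * y)
           (fib (Suc (length w)) * x + fib (length w) * y)"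
proof (induction w arbitrary: x y)
  case (Cons b w)
  define F F' where "F = fib (length w)" and "F' = fib (Suc (length w))"
  have "F \<le> F'" unfolding F_def F'_def by (rule fib_Suc_mono)
  then have mono: "F * x \<le> F' * x" "F * y \<le> F' * y" by simp_all
  have "snd (fold stern_step (b # w) (x, y)) \<le> F' * x + (F' + F) * y \<or>
        snd (fold stern_step (b # w) (x, y)) \<le> (F' + F) * x + F' * y"
  proof (cases b)
    case True
    then show ?thesis
      using Cons.IH [of "x + y" y] mono unfolding F_def [symmetric] F'_def [symmetric]
      by (simp add: algebra_simps)
  next
    case False
    then show ?thesis
      using Cons.IH [of x "x + y"] mono unfolding F_def [symmetric] F'_def [symmetric]
      by (simp add: algebra_simps)
  qed
  then show ?case by (simp only: F_def F'_def le_max_iff_disj length_Cons fib.simps(3))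
qed simp

lemma pow_str_0 [simp]: "pow_str xs 0 = []"
  by (simp add: pow_str_def)

lemma pow_str_Suc [simp]: "pow_str xs (Suc m) = xs @ pow_str xs m"
  by (simp add: pow_str_def)

lemma length_pow_str [simp]: "length (pow_str xs m) = m * length xs"
  by (induction m) auto

fun step10 :: "nat \<times> nat \<Rightarrow> nat \<times> nat" where
  "step10 (x, y) = (x + y, x + 2 * y)"

lemma fold_stern_step_pow_str_10:
  "fold stern_step (pow_str [True, False] m) p = (step10 ^^ m) p"
proof (induction m arbitrary: p)
  case (Suc m)
  obtain x y where "p = (x, y)" by fastforce
  then have "fold stern_step (pow_str [True, False] (Suc m)) p
      = fold stern_step (pow_str [True, False] m) (step10 p)"
    by (simp add: mult_2 add.assoc)
  then show ?case by (simp only: Suc.IH funpow_Suc_right comp_def)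
qed simp

lemma step10_funpow_Suc:
  "(step10 ^^ Suc j) (x, y)
     = (fib (2 * j + 1) * x + fib (2 * j + 2) * y, fib (2 * j + 2) * x + fib (2 * j + 3) * y)"
proof (induction j arbitrary: x y)
  case (Suc j)
  have "(step10 ^^ Suc (Suc j)) (x, y) = (step10 ^^ Suc j) (x + y, x + 2 * y)"
    by (simp only: funpow_Suc_right comp_def step10.simps)
  then show ?case
    unfolding Suc.IH by (simp add: numeral_eq_Suc algebra_simps)
qed (simp add: numeral_eq_Suc)

lemma snd_fold_stern_step_pow_str_10_False:
  "snd (fold stern_step (pow_str [True, False] m @ [False]) (x, y))
     = fib (2 * m + 1) * x + fib (2 * m + 2) * y"
  by (induction m arbitrary: x y) (simp_all add: numeral_eq_Suc algebra_simps)

lemma snd_fold_stern_step_above_pow_str_10_False: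
  assumes "length w = 2 * m + 1"
    and "ord_class.lexordp (pow_str [True, False] m @ [False]) w"
  shows "snd (fold stern_step w (x, y))
           \<le> snd (fold stern_step (pow_str [True, False] m @ [False]) (x, y))"
  using assms
proof (induction m arbitrary: x y w)
  case 0
  then have "w = [True]" by (auto simp: lexordp_Cons_left_iff)
  then show ?case by simp
next
  case (Suc m)
  then obtain w' where w': "w = True # w'"
    "ord_class.lexordp (False # pow_str [True, False] m @ [False]) w'"
    by (auto simp: lexordp_Cons_left_iff)
  then consider r where "w = True # True # r"
    | w'' where "w = True # False # w''" "ord_class.lexordp (pow_str [True, False] m @ [False]) w''"
    by (auto simp: lexordp_Cons_left_iff)
  then show ?case
  proof cases
    case (1 r)
    have len: "length r = 2 * m + 1" using 1 Suc.prems(1) by simp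
    have mono: "fib (2 * m + 1) \<le> fib (2 * m + 2)" by (rule fib_mono) simp
    have "snd (fold stern_step w (x, y)) = snd (fold stern_step r (x + y + y, y))"
      using 1 by simp
    also have "\<dots> \<le> max (fib (2 * m + 1) * (x + y + y) + fib (2 * m + 2) * y)
                         (fib (2 * m + 2) * (x + y + y) + fib (2 * m + 1) * y)"
      using snd_fold_stern_step_le_fib [of r] len by simp
    also have "\<dots> \<le> (fib (2 * m + 2) + fib (2 * m + 1)) * x
                     + (2 * fib (2 * m + 2) + fib (2 * m + 1)) * y"
      using mono mult_le_mono1 [OF mono, of x] mult_le_mono1 [OF mono, of y]
      by (simp add: algebra_simps)
    also have "\<dots> = snd (fold stern_step (pow_str [True, False] (Suc m) @ [False]) (x, y))"
      unfolding snd_fold_stern_step_pow_str_10_False by (simp add: numeral_eq_Suc algebra_simps)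
    finally show ?thesis .
  next
    case (2 w'')
    have "length w'' = 2 * m + 1" using 2 Suc.prems(1) by simp
    then show ?thesis using 2 Suc.IH [of w'' "x + y" "x + y + y"] by (simp add: mult_2 add.assoc)
  qed
qed

lemma lexordp_pow_str_10_False_cases:
  assumes "length w = 2 * m + 3"
    and "ord_class.lexordp w (pow_str [True, False] (Suc m) @ [False])"
  shows "ord_class.lexordp w (pow_str [True, False] m @ [False, True, False])
    \<or> w = pow_str [True, False] m @ [False, True, False]
    \<or> w = pow_str [True, False] m @ [False, True, True]"
  using assms
proof (induction m arbitrary: w)
  case 0
  then obtain a b where "w = [False, a, b]"
    by (auto simp: lexordp_Cons_right_iff length_Suc_conv numeral_eq_Suc)
  then show ?case by (cases a; cases b) simp_all
next
  case (Suc m)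
  obtain a r where w: "w = a # r" using Suc.prems(1) by (cases w) auto
  show ?case
  proof (cases a)
    case True
    then obtain w' where w': "w = True # False # w'"
      "ord_class.lexordp w' (pow_str [True, False] (Suc m) @ [False])"
      using Suc.prems w by (cases r) (auto simp: lexordp_Cons_right_iff)
    then have "length w' = 2 * m + 3" using Suc.prems(1) by simp
    then show ?thesis using w' Suc.IH [of w'] by auto
  qed (simp add: w)
qed

text \<open>The bound is the value of (10)^k 01010, the largest string below (10)^(k+1) 010; the
  hypothesis 8x \<le> 5y makes the strings (10)^i 0 r no better.\<close>

lemma snd_fold_stern_step_below_pow_str_10_010:
  assumes "8 * x \<le> 5 * y" and "length w = 2 * k + 5"
    and "ord_class.lexordp w (pow_str [True, False] (Suc k) @ [False, True, False])"
  shows "snd (fold stern_step w (x, y))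
           \<le> 8 * fst ((step10 ^^ k) (x, y)) + 5 * snd ((step10 ^^ k) (x, y))"
  using assms
proof (induction k arbitrary: x y w)
  case 0
  then obtain a r where w: "w = a # r" "length r = 4" by (cases w) auto
  show ?case
  proof (cases a)
    case False
    then have "snd (fold stern_step w (x, y))
        \<le> max (fib 4 * x + fib 5 * (x + y)) (fib 5 * x + fib 4 * (x + y))"
      using w snd_fold_stern_step_le_fib [of r x "x + y"] by simp
    then show ?thesis by (simp add: numeral_eq_Suc)
  next
    case True
    then obtain b where "w = [True, False, False, False, b]"
      using 0 w by (auto simp: lexordp_Cons_right_iff length_Suc_conv numeral_eq_Suc)
    then show ?thesis by (cases b) simp_all
  qed
next
  case (Suc k)
  obtain a r where w: "w = a # r" "length r = 2 * k + 6" using Suc.prems(2) by (cases w) auto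
  show ?case
  proof (cases a)
    case False
    define X Y where "X = fib (2 * k + 1)" and "Y = fib (2 * k + 2)"
    have "snd (fold stern_step w (x, y))
        \<le> max (fib (2 * k + 6) * x + fib (Suc (2 * k + 6)) * (x + y))
              (fib (Suc (2 * k + 6)) * x + fib (2 * k + 6) * (x + y))"
      using False w snd_fold_stern_step_le_fib [of r x "x + y"] by simp
    also have "\<dots> = max ((3 * X + 5 * Y) * x + (5 * X + 8 * Y) * (x + y))
                       ((5 * X + 8 * Y) * x + (3 * X + 5 * Y) * (x + y))"
    proof -
      have "fib (2 * k + 6) = 3 * X + 5 * Y" "fib (Suc (2 * k + 6)) = 5 * X + 8 * Y"
        unfolding X_def Y_def by (simp_all add: numeral_eq_Suc)
      then show ?thesis by (simp only:)
    qed
    also have "\<dots> \<le> 8 * (X * x + Y * y) + 5 * (Y * x + (X + Y) * y)"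
      using mult_le_mono2 [OF Suc.prems(1), of Y] by (simp add: algebra_simps)
    also have "\<dots> = 8 * fst ((step10 ^^ Suc k) (x, y)) + 5 * snd ((step10 ^^ Suc k) (x, y))"
      unfolding step10_funpow_Suc X_def Y_def by (simp add: numeral_eq_Suc algebra_simps)
    finally show ?thesis .
  next
    case True
    then obtain w' where w': "w = True # False # w'"
      "ord_class.lexordp w' (pow_str [True, False] (Suc k) @ [False, True, False])"
      using Suc.prems w by (cases r) (auto simp: lexordp_Cons_right_iff)
    have "length w' = 2 * k + 5" using w' Suc.prems(2) by simp
    moreover have "8 * (x + y) \<le> 5 * (x + 2 * y)" using Suc.prems(1) by simp
    ultimately have "snd (fold stern_step w' (x + y, x + 2 * y))
        \<le> 8 * fst ((step10 ^^ k) (x + y, x + 2 * y)) + 5 * snd ((step10 ^^ k) (x + y, x + 2 * y))"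
      using w' Suc.IH by blast
    moreover have "fold stern_step w (x, y) = fold stern_step w' (x + y, x + 2 * y)"
      using w' by (simp add: mult_2 add.assoc)
    moreover have "(step10 ^^ Suc k) (x, y) = (step10 ^^ k) (x + y, x + 2 * y)"
      by (simp only: funpow_Suc_right comp_def step10.simps)
    ultimately show ?thesis by simp
  qed
qed

lemma three_fib_le_two_fib_Suc: "m \<noteq> 1 \<Longrightarrow> 3 * fib m \<le> 2 * fib (Suc m)"
  using fib_Suc_mono [of "m - 2"] by (cases m rule: fib.cases) simp_all

lemma fib_add_4_le: "fib (m + 4) \<le> fib m + 4 * fib (Suc m)"
  using fib_Suc_mono [of m] by (simp add: numeral_eq_Suc)

lemma fib_2j_plus:
  fixes j :: nat
  defines "e \<equiv> fib (2 * j)" and "c \<equiv> fib (2 * j + 1)"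
  shows "fib (2 * j + 2) = c + e"
    and "fib (2 * j + 3) = 2 * c + e"
    and "fib (2 * j + 4) = 3 * c + 2 * e"
    and "fib (2 * j + 5) = 5 * c + 3 * e"
    and "fib (2 * j + 6) = 8 * c + 5 * e"
    and "fib (2 * j + 7) = 13 * c + 8 * e"
    and "fib (2 * j + 8) = 21 * c + 13 * e"
    and "fib (2 * j + 9) = 34 * c + 21 * e"
    and "fib (2 * j + 10) = 55 * c + 34 * e"
proof -
  note numeral_sum = add.assoc numeral_plus_one one_plus_numeral semiring_norm
  show f2: "fib (2 * j + 2) = c + e"
    using fib_plus_2 [of "2 * j"] unfolding c_def e_def by simp
  show f3: "fib (2 * j + 3) = 2 * c + e"
    using fib_plus_2 [of "2 * j + 1"] f2 by (simp only: numeral_sum; simp add: c_def)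
  show f4: "fib (2 * j + 4) = 3 * c + 2 * e"
    using fib_plus_2 [of "2 * j + 2"] f3 f2 by (simp only: numeral_sum; simp)
  show f5: "fib (2 * j + 5) = 5 * c + 3 * e"
    using fib_plus_2 [of "2 * j + 3"] f4 f3 by (simp only: numeral_sum; simp)
  show f6: "fib (2 * j + 6) = 8 * c + 5 * e"
    using fib_plus_2 [of "2 * j + 4"] f5 f4 by (simp only: numeral_sum; simp)
  show f7: "fib (2 * j + 7) = 13 * c + 8 * e"
    using fib_plus_2 [of "2 * j + 5"] f6 f5 by (simp only: numeral_sum; simp)
  show f8: "fib (2 * j + 8) = 21 * c + 13 * e"
    using fib_plus_2 [of "2 * j + 6"] f7 f6 by (simp only: numeral_sum; simp)
  show f9: "fib (2 * j + 9) = 34 * c + 21 * e"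
    using fib_plus_2 [of "2 * j + 7"] f8 f7 by (simp only: numeral_sum; simp)
  show f10: "fib (2 * j + 10) = 55 * c + 34 * e"
    using fib_plus_2 [of "2 * j + 8"] f9 f8 by (simp only: numeral_sum; simp)
qed

abbreviation prefix100100 :: "bool list" where
  "prefix100100 \<equiv> [True, False, False, True, False, False]"

definition tail_A :: "nat \<Rightarrow> bool list" where
  "tail_A n = pow_str [True, False] (n - 1) @ [False, True, False]"

definition tail_B :: "nat \<Rightarrow> bool list" where
  "tail_B n = pow_str [True, False] n @ [False]"

lemma length_tail_A: "1 \<le> n \<Longrightarrow> length (tail_A n) = 2 * n + 1"
  by (simp add: tail_A_def)

lemma length_tail_B: "length (tail_B n) = 2 * n + 1"
  by (simp add: tail_B_def)

definition rival :: "nat \<Rightarrow> nat" where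
  "rival n = bin_val ([True, False, False, False] @ pow_str [True, False] (n + 1) @ [False])"

lemma s_prefix_100100:
  "s (bin_val (prefix100100 @ w)) = snd (fold stern_step w (4, 11))"
  by (simp add: s_bin_val numeral_eq_Suc)

lemma s_prefix_1000: "s (bin_val ([True, False, False, False] @ w)) = snd (fold stern_step w (1, 4))"
  by (simp add: s_bin_val numeral_eq_Suc)

lemma s_rival: "s (rival n) = fib (2 * n + 3) + 4 * fib (Suc (2 * n + 3))"
  unfolding rival_def s_prefix_1000 snd_fold_stern_step_pow_str_10_False
  by (simp add: numeral_eq_Suc)

lemma s_values:
  fixes j :: nat
  defines "e \<equiv> fib (2 * j)" and "c \<equiv> fib (2 * j + 1)"
  shows "s (rival (j + 3)) = 254 * c + 157 * e"
    and "s (bin_val (prefix100100 @ tail_A (j + 3))) = 257 * c + 160 * e"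
    and "s (bin_val (prefix100100 @ tail_B (j + 3))) = 283 * c + 175 * e"
    and "8 * fst ((step10 ^^ Suc j) (4, 11)) + 5 * snd ((step10 ^^ Suc j) (4, 11)) = 250 * c + 163 * e"
proof -
  note f = fib_2j_plus [of j, folded e_def c_def]
  show "s (rival (j + 3)) = 254 * c + 157 * e"
    unfolding s_rival using f(8,9) by (simp add: algebra_simps)
  show "s (bin_val (prefix100100 @ tail_B (j + 3))) = 283 * c + 175 * e"
    unfolding tail_B_def s_prefix_100100 snd_fold_stern_step_pow_str_10_False
    using f(6,7) by (simp add: algebra_simps)
  have "2 * Suc j + 1 = 2 * j + 3" "2 * Suc j + 2 = 2 * j + 4" "2 * Suc j + 3 = 2 * j + 5"
    by simp_all
  then have "(step10 ^^ Suc (Suc j)) (4, 11) = (fib (2 * j + 3) * 4 + fib (2 * j + 4) * 11,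
      fib (2 * j + 4) * 4 + fib (2 * j + 5) * 11)"
    using step10_funpow_Suc [of "Suc j" 4 11] by (simp only:)
  moreover have "j + 3 - 1 = Suc (Suc j)" by simp
  ultimately show "s (bin_val (prefix100100 @ tail_A (j + 3)))
      = 257 * c + 160 * e"
    unfolding tail_A_def s_prefix_100100 fold_append comp_def fold_stern_step_pow_str_10
    using f(2-4) by (simp add: algebra_simps del: funpow.simps)
  show "8 * fst ((step10 ^^ Suc j) (4, 11)) + 5 * snd ((step10 ^^ Suc j) (4, 11)) = 250 * c + 163 * e"
    unfolding step10_funpow_Suc using f(1,2) by (simp add: c_def algebra_simps)
qed

lemma rival_less_prefix_100100:
  "length w = 2 * n + 1 \<Longrightarrow> rival n < bin_val (prefix100100 @ w)"
  unfolding rival_def by (subst bin_val_less_iff_lexordp) simp_all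

lemma s_below_prefix_100100:
  assumes "length t = 2 * n + 1" and "i < bin_val (prefix100100 @ t)"
  shows "s i \<le> s (rival n) \<or> (\<exists>w. length w = 2 * n + 1 \<and> ord_class.lexordp w t
           \<and> i = bin_val (prefix100100 @ w))"
proof -
  have "bin_val (prefix100100 @ t) < 2 ^ (2 * n + 7)"
    using assms(1) bin_val_less_power [of "prefix100100 @ t"]
    by (simp add: power_add)
  then have "i < 2 ^ (2 * n + 7)" using assms(2) by linarith
  then obtain xs where xs: "length xs = 2 * n + 7" "bin_val xs = i"
    using ex_bin_val_eq by blast
  then have "ord_class.lexordp xs (prefix100100 @ t)"
    using assms bin_val_less_iff_lexordp by fastforce
  then consider r where "xs = False # r" | r where "xs = [True, False, False, False] @ r"
    | w where "xs = prefix100100 @ w" "ord_class.lexordp w t"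
    using xs(1) by (auto simp: lexordp_Cons_right_iff; blast)
  then show ?thesis
  proof cases
    case (1 r)
    have len: "Suc (length r) = 2 * n + 3 + 4" using 1 xs by simp
    have "s i = snd (fold stern_step r (0, 1))" using 1 xs s_bin_val [of xs] by simp
    also have "\<dots> \<le> fib (Suc (length r))"
      using snd_fold_stern_step_le_fib [of r 0 1] fib_Suc_mono [of "length r"] by simp
    also have "\<dots> \<le> s (rival n)"
      unfolding len s_rival by (rule fib_add_4_le)
    finally show ?thesis ..
  next
    case (2 r)
    have len: "length r = 2 * n + 3" using 2 xs by simp
    have "s i = snd (fold stern_step r (1, 4))" using 2 xs s_prefix_1000 [of r] by simp
    also have "\<dots> \<le> fib (length r) + 4 * fib (Suc (length r))"
      using snd_fold_stern_step_le_fib [of r 1 4] fib_Suc_mono [of "length r"] by simp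
    also have "\<dots> = s (rival n)"
      unfolding len s_rival by simp
    finally show ?thesis ..
  next
    case (3 w)
    then show ?thesis using xs by auto
  qed
qed

lemma s_prefix_100100_below_tail_A:
  assumes "3 \<le> n" and "length w = 2 * n + 1" and "ord_class.lexordp w (tail_A n)"
  shows "s (bin_val (prefix100100 @ w)) \<le> s (rival n)"
proof -
  obtain j where n: "n = j + 3" using assms(1) le_Suc_ex by (metis add.commute)
  have "s (bin_val (prefix100100 @ w))
      \<le> 8 * fst ((step10 ^^ Suc j) (4, 11)) + 5 * snd ((step10 ^^ Suc j) (4, 11))"
    unfolding s_prefix_100100
    by (rule snd_fold_stern_step_below_pow_str_10_010) (use assms n in \<open>simp_all add: tail_A_def\<close>)
  also have "\<dots> \<le> s (rival n)"
    unfolding n s_values using three_fib_le_two_fib_Suc [of "2 * j"] by simp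
  finally show ?thesis .
qed

lemma s_rival_less_tail_A:
  "3 \<le> n \<Longrightarrow> s (rival n) < s (bin_val (prefix100100 @ tail_A n))"
  using fib_neq_0_nat [of "2 * (n - 3) + 1"] s_values [of "n - 3"] by simp

lemma s_tail_A_less_tail_B:
  "3 \<le> n \<Longrightarrow> s (bin_val (prefix100100 @ tail_A n))
      < s (bin_val (prefix100100 @ tail_B n))"
  using fib_neq_0_nat [of "2 * (n - 3) + 1"] s_values [of "n - 3"] by simp

lemma s_prefix_100100_below_tail_B:
  assumes "3 \<le> n" and "length w = 2 * n + 1" and "ord_class.lexordp w (tail_B n)"
  shows "s (bin_val (prefix100100 @ w))
    \<le> s (bin_val (prefix100100 @ tail_A n))"
proof -
  have "length w = 2 * (n - 1) + 3" "ord_class.lexordp w (pow_str [True, False] (Suc (n - 1)) @ [False])"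
    using assms by (simp_all add: tail_B_def Suc_diff_le)
  then consider "ord_class.lexordp w (tail_A n)" | "w = tail_A n"
    | "w = pow_str [True, False] (n - 1) @ [False, True, True]"
    unfolding tail_A_def by (blast dest: lexordp_pow_str_10_False_cases)
  then show ?thesis
  proof cases
    case 1
    then show ?thesis
      using assms s_prefix_100100_below_tail_A s_rival_less_tail_A by (meson le_less_trans less_imp_le)
  next
    case 3
    obtain X Y where XY: "(step10 ^^ (n - 1)) (4, 11) = (X, Y)" by fastforce
    show ?thesis
      unfolding 3 tail_A_def s_prefix_100100 fold_append comp_def fold_stern_step_pow_str_10 XY
      by simp
  qed simp
qed

lemma s_prefix_100100_above_tail_B:
  "length w = 2 * n + 1 \<Longrightarrow> ord_class.lexordp (tail_B n) w \<Longrightarrow>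
    s (bin_val (prefix100100 @ w))
      \<le> s (bin_val (prefix100100 @ tail_B n))"
  unfolding tail_B_def s_prefix_100100 by (rule snd_fold_stern_step_above_pow_str_10_False)

lemma prefix_100100_in_R_iff:
  assumes "3 \<le> n" and "length w = 2 * n + 1"
  shows "bin_val (prefix100100 @ w) \<in> R \<longleftrightarrow> w = tail_A n \<or> w = tail_B n"
proof -
  define v where "v w = bin_val (prefix100100 @ w)" for w
  have A: "length (tail_A n) = 2 * n + 1" and B: "length (tail_B n) = 2 * n + 1"
    using assms(1) by (simp_all add: length_tail_A length_tail_B)
  have less_iff: "v w' < v w'' \<longleftrightarrow> ord_class.lexordp w' w''"
    if "length w' = 2 * n + 1" "length w'' = 2 * n + 1" for w' w''
    unfolding v_def using that by (subst bin_val_less_iff_lexordp) simp_all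
  have below: "s i \<le> s (rival n) \<or> (\<exists>w'. length w' = 2 * n + 1 \<and> ord_class.lexordp w' t \<and> i = v w')"
    if "length t = 2 * n + 1" "i < v t" for i t
    using s_below_prefix_100100 that unfolding v_def by blast
  note bounds = s_prefix_100100_below_tail_A [OF assms(1)] s_prefix_100100_below_tail_B [OF assms(1)]
    s_prefix_100100_above_tail_B s_rival_less_tail_A [OF assms(1)] s_tail_A_less_tail_B [OF assms(1)]
  have "v (tail_A n) \<in> R"
    unfolding R_def using below [OF A] bounds unfolding v_def by fastforce
  moreover have "v (tail_B n) \<in> R"
    unfolding R_def using below [OF B] bounds unfolding v_def by (fastforce intro: le_less_trans)
  moreover have "w = tail_A n \<or> w = tail_B n" if "v w \<in> R"
  proof -
    have v_record: "i < v w \<Longrightarrow> s i < s (v w)" for i using that by (simp add: R_def)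
    have "\<not> ord_class.lexordp w (tail_A n)"
      using v_record [OF rival_less_prefix_100100 [OF assms(2), folded v_def]] bounds assms(2) unfolding v_def
      by fastforce
    moreover have "\<not> ord_class.lexordp (tail_A n) w \<or> \<not> ord_class.lexordp w (tail_B n)"
      using v_record less_iff [OF A assms(2)] bounds assms(2) A unfolding v_def by (metis leD)
    moreover have "\<not> ord_class.lexordp (tail_B n) w"
      using v_record less_iff [OF B assms(2)] bounds assms(2) B unfolding v_def by (metis leD)
    ultimately show ?thesis
      by (metis lexordp_linear)
  qed
  ultimately show ?thesis unfolding v_def by blast
qed

theorem mainTheorem18:
  fixes n :: nat
  assumes "n \<ge> 3"
  shows "{v \<in> R. length (bin_rep v) = 2 * n + 7
                 \<and> take 6 (bin_rep v) = [True, False, False, True, False, False]}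
       = { bin_val ([True, False, False, True, False, False] @ pow_str [True, False] (n - 1)
                    @ [False, True, False]),
           bin_val ([True, False, False, True, False, False] @ pow_str [True, False] n
                    @ [False]) }"
proof -
  have "length (bin_rep v) = 2 * n + 7 \<and> take 6 (bin_rep v) = prefix100100
      \<longleftrightarrow> (\<exists>w. length w = 2 * n + 1 \<and> v = bin_val (prefix100100 @ w))"
    for v using bin_rep_prefix_iff [of v "[False, False, True, False, False]" "2 * n + 1"]
    by (simp add: numeral_eq_Suc)
  then have "{v \<in> R. length (bin_rep v) = 2 * n + 7
                 \<and> take 6 (bin_rep v) = prefix100100}
      = (\<lambda>w. bin_val (prefix100100 @ w)) `
          {w. length w = 2 * n + 1 \<and> (w = tail_A n \<or> w = tail_B n)}"
    using prefix_100100_in_R_iff [OF assms] by auto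
  also have "\<dots> = (\<lambda>w. bin_val (prefix100100 @ w)) ` {tail_A n, tail_B n}"
    using assms length_tail_A length_tail_B by auto
  finally show ?thesis by (simp add: tail_A_def tail_B_def)
qed

end
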